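(* Let $F$ be a forest and let $\ell(F)$ be the length (number of edges) of a longest path in $F$. Then $\chi_{\mathrm{g}}(F)=2$ if and only if either $1\le \ell(F)\le 2$, or $\ell(F)=3$, $|V(F)|$ is odd, and every component of $F$ with diameter $3$ is a path.
   Context: The $t$-coloring game on a finite graph $G$ with a set $C$ of $t$ colors: Alice and Bob alternate turns, Alice first, each coloring an uncolored vertex with a color from $C$ that is legal (not used on any neighbor of the vertex). Bob wins if at some point an uncolored vertex has no legal color available; otherwise Alice wins when all vertices are colored. The game chromatic number $\chi_{\mathrm{g}}(G)$ is the least $t$ such that Alice has a winning strategy in the $t$-coloring game on the initially uncolored graph $G$. *)

theory Defs
  imports Main
begin

definition simple_graph :: "'a set \<Rightarrow> ('a \<Rightarrow> 'a \<Rightarrow> bool) \<Rightarrow> bool" where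
  "simple_graph V E \<longleftrightarrow> finite V \<and> (\<forall>u v. E u v \<longrightarrow> E v u)
     \<and> (\<forall>v. \<not> E v v) \<and> (\<forall>u v. E u v \<longrightarrow> u \<in> V \<and> v \<in> V)"

definition is_path :: "'a set \<Rightarrow> ('a \<Rightarrow> 'a \<Rightarrow> bool) \<Rightarrow> 'a list \<Rightarrow> bool" where
  "is_path V E p \<longleftrightarrow> p \<noteq> [] \<and> distinct p \<and> set p \<subseteq> V
     \<and> (\<forall>i. Suc i < length p \<longrightarrow> E (p ! i) (p ! Suc i))"

definition is_cycle :: "'a set \<Rightarrow> ('a \<Rightarrow> 'a \<Rightarrow> bool) \<Rightarrow> 'a list \<Rightarrow> bool" where
  "is_cycle V E p \<longleftrightarrow> is_path V E p \<and> length p \<ge> 3 \<and> E (last p) (hd p)"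

definition forest :: "'a set \<Rightarrow> ('a \<Rightarrow> 'a \<Rightarrow> bool) \<Rightarrow> bool" where
  "forest V E \<longleftrightarrow> simple_graph V E \<and> (\<nexists>p. is_cycle V E p)"

definition longest_path_length :: "'a set \<Rightarrow> ('a \<Rightarrow> 'a \<Rightarrow> bool) \<Rightarrow> nat" where
  "longest_path_length V E =
     (if \<exists>p. is_path V E p then Max {length p - 1 | p. is_path V E p} else 0)"

definition component :: "('a \<Rightarrow> 'a \<Rightarrow> bool) \<Rightarrow> 'a \<Rightarrow> 'a set" where
  "component E v = {u. E\<^sup>*\<^sup>* v u}"

definition gdist :: "('a \<Rightarrow> 'a \<Rightarrow> bool) \<Rightarrow> 'a \<Rightarrow> 'a \<Rightarrow> nat" where
  "gdist E u v = (LEAST n. (E ^^ n) u v)"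

definition diameter :: "('a \<Rightarrow> 'a \<Rightarrow> bool) \<Rightarrow> 'a set \<Rightarrow> nat" where
  "diameter E C = Max {gdist E u v | u v. u \<in> C \<and> v \<in> C}"

definition induced_is_path :: "('a \<Rightarrow> 'a \<Rightarrow> bool) \<Rightarrow> 'a set \<Rightarrow> bool" where
  "induced_is_path E C \<longleftrightarrow> (\<exists>p. p \<noteq> [] \<and> distinct p \<and> set p = C \<and>
     (\<forall>u\<in>C. \<forall>v\<in>C. E u v \<longleftrightarrow>
        (\<exists>i. Suc i < length p \<and> ((u = p ! i \<and> v = p ! Suc i) \<or> (v = p ! i \<and> u = p ! Suc i)))))"

text \<open>The coloring game. A position is a partial coloring c (colors are 0..<t);
  the boolean says whether it is Alice's turn.\<close>

definition legal :: "('a \<Rightarrow> 'a \<Rightarrow> bool) \<Rightarrow> nat \<Rightarrow> ('a \<Rightarrow> nat option) \<Rightarrow> 'a \<Rightarrow> nat \<Rightarrow> bool" where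
  "legal E t c v k \<longleftrightarrow> k < t \<and> \<not> (\<exists>u. E v u \<and> c u = Some k)"

definition blocked :: "'a set \<Rightarrow> ('a \<Rightarrow> 'a \<Rightarrow> bool) \<Rightarrow> nat \<Rightarrow> ('a \<Rightarrow> nat option) \<Rightarrow> bool" where
  "blocked V E t c \<longleftrightarrow> (\<exists>v\<in>V. c v = None \<and> (\<forall>k. \<not> legal E t c v k))"

inductive alice_wins :: "'a set \<Rightarrow> ('a \<Rightarrow> 'a \<Rightarrow> bool) \<Rightarrow> nat \<Rightarrow> ('a \<Rightarrow> nat option) \<Rightarrow> bool \<Rightarrow> bool"
  for V E t where
  all_colored: "\<forall>v\<in>V. c v \<noteq> None \<Longrightarrow> alice_wins V E t c turn"
| alice_move: "\<not> blocked V E t c \<Longrightarrow> v \<in> V \<Longrightarrow> c v = None \<Longrightarrow> legal E t c v k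
     \<Longrightarrow> alice_wins V E t (c(v := Some k)) False \<Longrightarrow> alice_wins V E t c True"
| bob_move: "\<not> blocked V E t c \<Longrightarrow>
     (\<forall>v k. v \<in> V \<longrightarrow> c v = None \<longrightarrow> legal E t c v k \<longrightarrow> alice_wins V E t (c(v := Some k)) True)
     \<Longrightarrow> alice_wins V E t c False"

definition game_chromatic_number :: "'a set \<Rightarrow> ('a \<Rightarrow> 'a \<Rightarrow> bool) \<Rightarrow> nat" where
  "game_chromatic_number V E = (LEAST t. alice_wins V E t (\<lambda>_. None) True)"

end

theory Submission
  imports Defs
begin

text \<open>
  With at most one colour an edge can never be fully coloured, so the question is when Alice
  wins with two colours. Bob wins if the forest contains a path on five vertices (a P5): he
  answers Alice by giving the far end of a two-edge path the other colour, which blocks its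
  middle vertex. Without a P5 every component is a star or a double star. If some P4 branches
  at an inner vertex, or if there is a P4 and the number of vertices is even, Bob plays outside
  the component of that P4 and blocks a vertex as soon as Alice enters it; in the even case
  Alice is the one who runs out of moves outside, and in the branching case Bob may also enter
  first, at a leaf next to the branch vertex. Otherwise Alice keeps every uncoloured vertex
  either untouched or completely surrounded with a free colour, and the parity of the number of
  vertices makes Bob the first to enter each P4 component. Finally, being P5-free means that
  longest paths have length at most 3, and for P5-free forests the absence of branching P4s
  means that the components of diameter 3 are paths.
\<close>

section \<open>Paths and forests\<close>

lemma is_path_singleton [simp]: "is_path V E [x] \<longleftrightarrow> x \<in> V"
  by (simp add: is_path_def)

lemma is_path_Cons_Cons [simp]:
  "is_path V E (x # y # xs) \<longleftrightarrow> x \<in> V \<and> E x y \<and> x \<notin> set (y # xs) \<and> is_path V E (y # xs)"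
  unfolding is_path_def by (auto simp: nth_Cons less_Suc_eq_0_disj split: nat.split)

lemma is_path_take: "is_path V E p \<Longrightarrow> 0 < n \<Longrightarrow> is_path V E (take n p)"
  unfolding is_path_def by (auto dest: in_set_takeD)

lemma length_le_card_if_is_path: "finite V \<Longrightarrow> is_path V E p \<Longrightarrow> length p \<le> card V"
  unfolding is_path_def by (metis card_mono distinct_card)

lemma longest_path_length_ge_iff:
  assumes "finite V" "0 < n"
  shows "n \<le> longest_path_length V E \<longleftrightarrow> (\<exists>p. is_path V E p \<and> length p = Suc n)"
proof -
  let ?L = "{length p - 1 | p. is_path V E p}"
  have fin: "finite ?L"
    by (rule finite_subset[of _ "{..card V}"])
      (use length_le_card_if_is_path[OF assms(1)] in fastforce)+
  show ?thesis
  proof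
    assume "n \<le> longest_path_length V E"
    with assms(2) have ex: "\<exists>p. is_path V E p" and "n \<le> Max ?L"
      unfolding longest_path_length_def by (auto split: if_splits)
    moreover have "Max ?L \<in> ?L" using fin ex by (intro Max_in) auto
    ultimately obtain p where p: "is_path V E p" "n \<le> length p - 1" by auto
    then have "Suc n \<le> length p" by (cases p) (auto simp: is_path_def)
    with p show "\<exists>p. is_path V E p \<and> length p = Suc n"
      by (intro exI[of _ "take (Suc n) p"]) (auto simp: is_path_take)
  next
    assume "\<exists>p. is_path V E p \<and> length p = Suc n"
    then obtain p where p: "is_path V E p" "length p = Suc n" by blast
    then have "n \<in> ?L" by force
    with p fin show "n \<le> longest_path_length V E"
      unfolding longest_path_length_def by (auto intro: Max_ge)
  qed
qed

definition has_P4 :: "('a \<Rightarrow> 'a \<Rightarrow> bool) \<Rightarrow> bool" where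
  "has_P4 E \<longleftrightarrow> (\<exists>a b c d. distinct [a, b, c, d] \<and> E a b \<and> E b c \<and> E c d)"

definition has_P5 :: "('a \<Rightarrow> 'a \<Rightarrow> bool) \<Rightarrow> bool" where
  "has_P5 E \<longleftrightarrow> (\<exists>a b c d e. distinct [a, b, c, d, e] \<and> E a b \<and> E b c \<and> E c d \<and> E d e)"

locale sgraph =
  fixes V :: "'a set" and E :: "'a \<Rightarrow> 'a \<Rightarrow> bool"
  assumes simple: "simple_graph V E"
begin

lemma finite_V: "finite V"
  using simple by (simp add: simple_graph_def)

lemma edge_sym: "E u v \<Longrightarrow> E v u"
  using simple by (simp add: simple_graph_def)

lemma edge_irrefl: "\<not> E v v"
  using simple by (simp add: simple_graph_def)

lemma edge_neq: "E u v \<Longrightarrow> u \<noteq> v"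
  using edge_irrefl by auto

lemma edge_in_V: "E u v \<Longrightarrow> u \<in> V" "E u v \<Longrightarrow> v \<in> V"
  using simple by (simp_all add: simple_graph_def)

lemma symp_E: "symp E"
  by (auto intro: sympI edge_sym)

lemma has_edge_iff: "(\<exists>u v. E u v) \<longleftrightarrow> 1 \<le> longest_path_length V E"
proof -
  have "(\<exists>u v. E u v) \<longleftrightarrow> (\<exists>p. is_path V E p \<and> length p = 2)"
  proof
    assume "\<exists>u v. E u v"
    then obtain u v where "E u v" by blast
    then show "\<exists>p. is_path V E p \<and> length p = 2"
      by (intro exI[of _ "[u, v]"]) (auto simp: edge_in_V edge_neq)
  qed (auto simp: numeral_eq_Suc length_Suc_conv, blast)
  then show ?thesis
    using longest_path_length_ge_iff[OF finite_V, of 1] by (simp add: numeral_2_eq_2)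
qed

lemma has_P4_iff: "has_P4 E \<longleftrightarrow> 3 \<le> longest_path_length V E"
proof -
  have "has_P4 E \<longleftrightarrow> (\<exists>p. is_path V E p \<and> length p = 4)"
  proof
    assume "has_P4 E"
    then obtain a b c d where "distinct [a, b, c, d]" "E a b" "E b c" "E c d"
      unfolding has_P4_def by blast
    then show "\<exists>p. is_path V E p \<and> length p = 4"
      by (intro exI[of _ "[a, b, c, d]"]) (auto simp: edge_in_V)
  qed (auto simp: has_P4_def numeral_eq_Suc length_Suc_conv, blast)
  then show ?thesis using longest_path_length_ge_iff[OF finite_V, of 3] by simp
qed

lemma has_P5_iff: "has_P5 E \<longleftrightarrow> 4 \<le> longest_path_length V E"
proof -
  have "has_P5 E \<longleftrightarrow> (\<exists>p. is_path V E p \<and> length p = 5)"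
  proof
    assume "has_P5 E"
    then obtain a b c d e where "distinct [a, b, c, d, e]" "E a b" "E b c" "E c d" "E d e"
      unfolding has_P5_def by blast
    then show "\<exists>p. is_path V E p \<and> length p = 5"
      by (intro exI[of _ "[a, b, c, d, e]"]) (auto simp: edge_in_V)
  qed (auto simp: has_P5_def numeral_eq_Suc length_Suc_conv, blast)
  then show ?thesis using longest_path_length_ge_iff[OF finite_V, of 4] by simp
qed

end

locale forest_graph = sgraph +
  assumes no_cycle: "\<not> is_cycle V E p"

lemma forest_graph_if_forest: "forest V E \<Longrightarrow> forest_graph V E"
  by unfold_locales (auto simp: forest_def)

context forest_graph
begin

lemma no_cycle_closing: "is_path V E p \<Longrightarrow> 3 \<le> length p \<Longrightarrow> \<not> E (last p) (hd p)"
  using no_cycle by (auto simp: is_cycle_def)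

lemma no_triangle: "E a b \<Longrightarrow> E b c \<Longrightarrow> \<not> E c a"
proof
  assume "E a b" "E b c" "E c a"
  then have "is_path V E [a, b, c]" by (auto simp: edge_in_V dest: edge_neq)
  with \<open>E c a\<close> show False using no_cycle_closing[of "[a, b, c]"] by simp
qed

lemma no_4_cycle: "E a b \<Longrightarrow> E b c \<Longrightarrow> E c d \<Longrightarrow> a \<noteq> c \<Longrightarrow> b \<noteq> d \<Longrightarrow> \<not> E d a"
proof
  assume "E a b" "E b c" "E c d" "a \<noteq> c" "b \<noteq> d" "E d a"
  then have "is_path V E [a, b, c, d]"
    using no_triangle[of b c a] by (auto simp: edge_in_V dest: edge_neq)
  with \<open>E d a\<close> show False using no_cycle_closing[of "[a, b, c, d]"] by simp
qed

lemma distinct_if_walk4: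
  assumes "E a b" "E b c" "E c d" "a \<noteq> c" "b \<noteq> d"
  shows "distinct [a, b, c, d]"
proof -
  have "a \<noteq> d" using no_triangle[OF assms(1,2)] assms(3) by blast
  with assms show ?thesis by (auto dest: edge_neq)
qed

lemma leaf_beyond_path_end:
  assumes "\<not> has_P5 E" "E b c" "E c d" "b \<noteq> d" "E b y" "y \<noteq> c" "E y z"
  shows "z = b"
proof (rule ccontr)
  assume "z \<noteq> b"
  have "E c b" "E y b" "E z y" using assms(2,5,7) edge_sym by blast+
  have "y \<noteq> d" using no_triangle[OF assms(2,3)] \<open>E y b\<close> by blast
  moreover have "z \<noteq> c" using no_triangle[OF assms(5,7)] \<open>E c b\<close> by blast
  moreover have "z \<noteq> d"
  proof
    assume "z = d"
    then have "E y d" "E d c" using assms(3,7) edge_sym by blast+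
    with no_4_cycle[of b y d c] assms(4-6) \<open>E c b\<close> show False by blast
  qed
  moreover have "y \<noteq> b" "z \<noteq> y" "b \<noteq> c" "c \<noteq> d" using assms edge_neq by blast+
  ultimately have "distinct [z, y, b, c, d]" using \<open>z \<noteq> b\<close> assms(4,6) by auto
  then show False
    using assms(1-3) \<open>E z y\<close> \<open>E y b\<close> unfolding has_P5_def by blast
qed

end

section \<open>The colouring game\<close>

lemma alice_wins_True_iff:
  "alice_wins V E t c True \<longleftrightarrow> (\<forall>v\<in>V. c v \<noteq> None) \<or> (\<not> blocked V E t c \<and>
     (\<exists>v k. v \<in> V \<and> c v = None \<and> legal E t c v k \<and> alice_wins V E t (c(v := Some k)) False))"
  by (blast intro: alice_wins.intros elim: alice_wins.cases)

lemma alice_wins_False_iff: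
  "alice_wins V E t c False \<longleftrightarrow> (\<forall>v\<in>V. c v \<noteq> None) \<or> (\<not> blocked V E t c \<and>
     (\<forall>v k. v \<in> V \<longrightarrow> c v = None \<longrightarrow> legal E t c v k \<longrightarrow> alice_wins V E t (c(v := Some k)) True))"
  by (blast intro: alice_wins.intros elim: alice_wins.cases)

lemma not_alice_wins_if_blocked: "blocked V E t c \<Longrightarrow> \<not> alice_wins V E t c turn"
proof
  assume "blocked V E t c" and "alice_wins V E t c turn"
  from this(2) show False
    by (cases rule: alice_wins.cases) (use \<open>blocked V E t c\<close> in \<open>auto simp: blocked_def\<close>)
qed

lemma blocked_if_sees_all_colours:
  "v \<in> V \<Longrightarrow> c v = None \<Longrightarrow> (\<And>k. k < t \<Longrightarrow> \<exists>u. E v u \<and> c u = Some k) \<Longrightarrow> blocked V E t c"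
  unfolding blocked_def legal_def by blast

definition uncoloured :: "'a set \<Rightarrow> ('a \<Rightarrow> nat option) \<Rightarrow> nat" where
  "uncoloured V c = card {v\<in>V. c v = None}"

lemma uncoloured_fun_upd:
  assumes "finite V" "v \<in> V" "c v = None"
  shows "Suc (uncoloured V (c(v := Some k))) = uncoloured V c"
proof -
  have "{x\<in>V. (c(v := Some k)) x = None} = {x\<in>V. c x = None} - {v}" by auto
  then show ?thesis
    using assms card_Suc_Diff1[of "{x\<in>V. c x = None}" v] unfolding uncoloured_def by simp
qed

lemma card_minus_uncoloured_fun_upd:
  assumes "finite V" "v \<in> V" "c v = None"
  shows "card V - uncoloured V (c(v := Some k)) = Suc (card V - uncoloured V c)"
proof -
  have "uncoloured V c \<le> card V"
    using assms(1) unfolding uncoloured_def by (intro card_mono) auto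
  then show ?thesis using uncoloured_fun_upd[of V v c k] assms by linarith
qed

lemma alice_wins_if_never_blocked:
  assumes "finite V" "\<And>c. \<not> blocked V E t c"
  shows "alice_wins V E t c turn"
proof (induction "uncoloured V c" arbitrary: c turn rule: less_induct)
  case (less c turn)
  have IH: "alice_wins V E t (c(v := Some k)) turn'" if "v \<in> V" "c v = None" for v k turn'
    using less uncoloured_fun_upd[of V v c k] assms(1) that by (metis lessI)
  show ?case
  proof (cases "\<forall>v\<in>V. c v \<noteq> None")
    case False
    then obtain v where v: "v \<in> V" "c v = None" by auto
    from assms(2)[of c] v obtain k where "legal E t c v k" by (auto simp: blocked_def)
    show ?thesis
    proof (cases turn)
      case True
      then show ?thesis
        using alice_wins.alice_move[OF assms(2) v \<open>legal E t c v k\<close> IH[OF v]] by simp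
    next
      case False
      have "alice_wins V E t c False"
        by (intro alice_wins.bob_move[OF assms(2)] allI impI IH)
      then show ?thesis using False by simp
    qed
  qed (rule alice_wins.all_colored)
qed

lemma not_blocked_if_card_less:
  assumes "finite V" "\<And>u v. E u v \<Longrightarrow> v \<in> V" "card V < t"
  shows "\<not> blocked V E t c"
proof
  assume "blocked V E t c"
  then obtain v where v: "\<forall>k. \<not> legal E t c v k" by (auto simp: blocked_def)
  have "{..<t} \<subseteq> (\<lambda>u. the (c u)) ` {u\<in>V. E v u}"
  proof
    fix k assume "k \<in> {..<t}"
    then obtain u where "E v u" "c u = Some k" using v by (auto simp: legal_def)
    then show "k \<in> (\<lambda>u. the (c u)) ` {u\<in>V. E v u}" using assms(2) by force
  qed
  then have "card {..<t} \<le> card ((\<lambda>u. the (c u)) ` {u\<in>V. E v u})"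
    using assms(1) by (intro card_mono) auto
  also have "\<dots> \<le> card {u\<in>V. E v u}"
    using assms(1) by (simp add: card_image_le)
  also have "\<dots> \<le> card V"
    using assms(1) by (simp add: card_mono)
  finally show False using assms(3) by simp
qed

context sgraph
begin

lemma blocked_after_colouring_neighbour:
  assumes "t \<le> 1" "E x y" "c y = None" "k < t"
  shows "blocked V E t (c(x := Some k))"
proof (rule blocked_if_sees_all_colours)
  show "y \<in> V" using edge_in_V(2)[OF assms(2)] .
  show "(c(x := Some k)) y = None" using assms(3) edge_neq[OF assms(2)] by simp
  fix k' assume "k' < t"
  then show "\<exists>w. E y w \<and> (c(x := Some k)) w = Some k'"
    using assms(1,4) edge_sym[OF assms(2)] by (intro exI[of _ x]) simp
qed

lemma edge_not_uncoloured_if_alice_wins: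
  assumes "alice_wins V E t c turn" "E u v" "t \<le> 1"
  shows "c u \<noteq> None \<or> c v \<noteq> None"
  using assms(1)
proof (induction rule: alice_wins.induct)
  case (all_colored c turn)
  then show ?case using edge_in_V(1)[OF assms(2)] by blast
next
  case (alice_move c w k)
  have "k < t" using alice_move.hyps(4) by (simp add: legal_def)
  have "\<not> blocked V E t (c(w := Some k))"
    using alice_move.hyps(5) not_alice_wins_if_blocked by blast
  moreover note blocked_after_colouring_neighbour[where c = c, OF assms(3) _ _ \<open>k < t\<close>]
  ultimately have "w \<noteq> u" "w \<noteq> v" if "c u = None" "c v = None"
    using that assms(2) edge_sym[OF assms(2)] by blast+
  then show ?case using alice_move.IH by fastforce
next
  case (bob_move c)
  show ?case
  proof (rule ccontr)
    assume "\<not> (c u \<noteq> None \<or> c v \<noteq> None)"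
    then have none: "c u = None" "c v = None" by simp_all
    then obtain k where k: "legal E t c u k"
      using bob_move.hyps(1) edge_in_V(1)[OF assms(2)] by (auto simp: blocked_def)
    then have "alice_wins V E t (c(u := Some k)) True"
      using bob_move.IH none(1) edge_in_V(1)[OF assms(2)] by blast
    moreover have "blocked V E t (c(u := Some k))"
      using blocked_after_colouring_neighbour[where c = c, OF assms(3,2) none(2)] k
      by (simp add: legal_def)
    ultimately show False using not_alice_wins_if_blocked by blast
  qed
qed

lemma game_chromatic_number_eq_2_iff:
  "game_chromatic_number V E = 2 \<longleftrightarrow> (\<exists>u v. E u v) \<and> alice_wins V E 2 (\<lambda>_. None) True"
    (is "_ \<longleftrightarrow> _ \<and> ?W 2")
proof -
  have gcn: "game_chromatic_number V E = (LEAST t. ?W t)"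
    unfolding game_chromatic_number_def ..
  have "?W (Suc (card V))"
    using not_blocked_if_card_less[OF finite_V] edge_in_V(2)
    by (intro alice_wins_if_never_blocked[OF finite_V]) blast
  then have W_least: "?W (LEAST t. ?W t)" by (rule LeastI)
  show ?thesis
  proof (cases "\<exists>u v. E u v")
    case True
    then have no_W: "\<not> ?W t" if "t \<le> 1" for t
      using that edge_not_uncoloured_if_alice_wins by blast
    have "(LEAST t. ?W t) = 2" if "?W 2"
    proof (rule Least_equality[where P = ?W, OF that])
      fix t assume "?W t"
      then have "\<not> t \<le> 1" using no_W by blast
      then show "2 \<le> t" by simp
    qed
    with W_least True show ?thesis unfolding gcn by auto
  next
    case False
    then have "\<not> blocked V E 1 c" for c
      by (auto simp: blocked_def legal_def)
    then have "?W 1" by (intro alice_wins_if_never_blocked[OF finite_V])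
    then have "(LEAST t. ?W t) \<le> 1" by (rule Least_le)
    then have "(LEAST t. ?W t) \<noteq> 2" by linarith
    with False show ?thesis unfolding gcn by blast
  qed
qed

end

section \<open>Bob's strategies\<close>

context sgraph
begin

text \<open>Bob colours \<open>w\<close> with \<open>1 - k\<close>, so that \<open>u\<close> sees both colours.\<close>

lemma bob_wins_by_blocking:
  assumes "E x u" "E u w" "w \<noteq> x" "c u = None" "c w = None" "c x = Some k" "k < 2"
    and "\<forall>z. E w z \<longrightarrow> c z \<noteq> Some (1 - k)"
  shows "\<not> alice_wins V E 2 c False"
proof
  assume "alice_wins V E 2 c False"
  moreover have "legal E 2 c w (1 - k)" using assms(8) by (simp add: legal_def)
  moreover have "w \<in> V" using assms(2) edge_in_V by blast
  ultimately have "alice_wins V E 2 (c(w := Some (1 - k))) True"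
    using assms(5) by (auto simp: alice_wins_False_iff)
  moreover have "blocked V E 2 (c(w := Some (1 - k)))"
  proof (rule blocked_if_sees_all_colours)
    show "u \<in> V" using assms(1) edge_in_V by blast
    show "(c(w := Some (1 - k))) u = None" using assms(2,4) edge_neq by auto
    fix k' :: nat assume "k' < 2"
    then have "k' = k \<or> k' = 1 - k" using assms(7) by auto
    then show "\<exists>y. E u y \<and> (c(w := Some (1 - k))) y = Some k'"
    proof
      assume "k' = k"
      then show ?thesis using assms(1,3,6) edge_sym by (intro exI[of _ x]) auto
    qed (use assms(2) in auto)
  qed
  ultimately show False using not_alice_wins_if_blocked by blast
qed

end

context forest_graph
begin

lemma no_vertex_near_both_ends_of_P5:
  assumes "distinct [a, b, c, d, e]" "E a b" "E b c" "E c d" "E d e"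
    and "z = a \<or> z = b \<or> E z a" and "z = d \<or> z = e \<or> E z e"
  shows False
proof -
  have path: "is_path V E [a, b, c, d, e]" using assms(1-5) by (simp add: edge_in_V)
  have "\<not> E e a" using no_cycle_closing[OF path] by simp
  moreover have "\<not> E d a" using no_4_cycle[OF assms(2-4)] assms(1) by simp
  moreover have "\<not> E e b" using no_4_cycle[OF assms(3-5)] assms(1) by simp
  moreover have "\<not> E c a" using no_triangle[OF assms(2,3)] .
  moreover have "z \<in> {a, b, c, d, e}" if "E z a" "E z e"
  proof (rule ccontr)
    assume "z \<notin> {a, b, c, d, e}"
    with that path edge_sym[OF that(2)] have "is_path V E [a, b, c, d, e, z]"
      by (auto simp: edge_in_V)
    with that show False using no_cycle_closing[of "[a, b, c, d, e, z]"] by simp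
  qed
  ultimately show False
    using assms(1,6,7) edge_sym[of a e] edge_sym[of b e] edge_irrefl by auto
qed

text \<open>
  Bob has taken the centre \<open>v3\<close>. Alice's next vertex is near at most one end of the path,
  and Bob blocks \<open>v2\<close> or \<open>v4\<close> from the other end.
\<close>

lemma bob_wins_from_centre_of_P5:
  assumes d: "distinct [v1, v2, v3, v4, v5]" and e: "E v1 v2" "E v2 v3" "E v3 v4" "E v4 v5"
    and centre: "c v3 = Some 0"
    and far: "\<And>y. y \<noteq> v3 \<Longrightarrow> c y \<noteq> None \<Longrightarrow>
      y \<notin> {v1, v2, v3, v4, v5} \<and> (\<forall>p\<in>{v1, v2, v3, v4, v5}. \<not> E y p)"
  shows "\<not> alice_wins V E 2 c True"
proof
  let ?P = "{v1, v2, v3, v4, v5}"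
  have off_centre: "c p = None" if "p \<in> ?P" "p \<noteq> v3" for p
    using far that by blast
  assume "alice_wins V E 2 c True"
  moreover have "v1 \<in> V" "c v1 = None" using edge_in_V(1)[OF e(1)] off_centre d by auto
  ultimately obtain z j where "c z = None" and after: "alice_wins V E 2 (c(z := Some j)) False"
    by (auto simp: alice_wins_True_iff)
  then have "z \<noteq> v3" using centre by auto
  have block_side: "\<not> alice_wins V E 2 (c(z := Some j)) False"
    if "E v3 b" "E b a" "a \<noteq> v3" "a \<in> ?P" "b \<in> ?P" "z \<noteq> a" "z \<noteq> b" "\<not> E z a" for a b
  proof (rule bob_wins_by_blocking[OF that(1-3)])
    show "(c(z := Some j)) b = None" "(c(z := Some j)) a = None"
      using off_centre that edge_neq[OF that(1)] by auto
    show "(c(z := Some j)) v3 = Some 0" using \<open>z \<noteq> v3\<close> centre by simp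
    show "\<forall>y. E a y \<longrightarrow> (c(z := Some j)) y \<noteq> Some (1 - 0)"
    proof (intro allI impI)
      fix y assume "E a y"
      then have "y \<noteq> z" "y \<noteq> v3"
        using that(8) no_triangle[OF that(1,2)] edge_sym[OF \<open>E a y\<close>] by auto
      moreover have "c y = None" using far[of y] that(4) \<open>y \<noteq> v3\<close> edge_sym[OF \<open>E a y\<close>] by blast
      ultimately show "(c(z := Some j)) y \<noteq> Some (1 - 0)" by simp
    qed
  qed simp
  have "\<not> ((z = v1 \<or> z = v2 \<or> E z v1) \<and> (z = v4 \<or> z = v5 \<or> E z v5))"
    using no_vertex_near_both_ends_of_P5[OF d e] by blast
  then show False
    using after block_side[of v2 v1] block_side[of v4 v5] e d edge_sym[of v1 v2] edge_sym[of v2 v3]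
    by auto
qed

text \<open>
  Alice's first vertex either starts a path with two edges, which Bob blocks at once, or lies
  away from the P5, and then Bob takes its centre.
\<close>

lemma not_alice_wins_2_if_has_P5:
  assumes "has_P5 E"
  shows "\<not> alice_wins V E 2 (\<lambda>_. None) True"
proof
  obtain v1 v2 v3 v4 v5 where d: "distinct [v1, v2, v3, v4, v5]"
    and e: "E v1 v2" "E v2 v3" "E v3 v4" "E v4 v5"
    using assms unfolding has_P5_def by blast
  let ?P = "{v1, v2, v3, v4, v5}"
  have PV: "?P \<subseteq> V" using e edge_in_V by auto
  assume "alice_wins V E 2 (\<lambda>_. None) True"
  then obtain x k where x: "x \<in> V" "legal E 2 (\<lambda>_. None) x k"
    and "alice_wins V E 2 ((\<lambda>_. None)(x := Some k)) False"
    using PV by (auto simp: alice_wins_True_iff)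
  define c1 where "c1 = (\<lambda>_. None)(x := Some k)"
  have a1: "alice_wins V E 2 c1 False"
    unfolding c1_def by fact
  have "k < 2" using x by (simp add: legal_def)
  then have k: "k < 2" "1 - k \<noteq> k" by arith+
  show False
  proof (cases "\<exists>u w. E x u \<and> E u w \<and> w \<noteq> x")
    case True
    then obtain u w where uw: "E x u" "E u w" "w \<noteq> x" by blast
    have "\<not> alice_wins V E 2 c1 False"
      by (rule bob_wins_by_blocking[OF uw]) (use uw k edge_neq in \<open>auto simp: c1_def\<close>)
    then show False using a1 by blast
  next
    case False
    have "\<exists>w\<in>?P. E y w \<and> (\<exists>w'. E w w' \<and> w' \<noteq> y)" if "y \<in> ?P" for y
      using that d e edge_sym by (elim insertE) (auto intro: edge_sym)
    with False have far: "x \<notin> ?P" "\<forall>p\<in>?P. \<not> E x p"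
      by blast+
    have "\<not> E v3 x" using far(2) edge_sym by blast
    then have "legal E 2 c1 v3 0" by (auto simp: c1_def legal_def)
    moreover have "v3 \<in> V" "c1 v3 = None" "c1 v1 = None" using PV far(1) by (auto simp: c1_def)
    ultimately have "alice_wins V E 2 (c1(v3 := Some 0)) True"
      using a1 unfolding alice_wins_False_iff by (metis PV insert_subset)
    moreover have "\<not> alice_wins V E 2 (c1(v3 := Some 0)) True"
      using far by (intro bob_wins_from_centre_of_P5[OF d e]) (auto simp: c1_def split: if_splits)
    ultimately show False by blast
  qed
qed

lemma bob_wins_after_entering:
  assumes closed: "\<And>x y. x \<in> X \<Longrightarrow> E x y \<Longrightarrow> y \<in> X"
    and x: "x \<in> X" "c x = Some k" "k < 2" "\<forall>y\<in>X. y \<noteq> x \<longrightarrow> c y = None"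
    and path: "E x u" "E u w" "w \<noteq> x"
  shows "\<not> alice_wins V E 2 c False"
proof (rule bob_wins_by_blocking[where c = c, OF path _ _ x(2,3)])
  have "u \<in> X" "w \<in> X" using closed x(1) path by blast+
  then show "c u = None" "c w = None" using x(4) path(3) edge_neq[OF path(1)] by auto
  show "\<forall>z. E w z \<longrightarrow> c z \<noteq> Some (1 - k)"
    using closed \<open>w \<in> X\<close> x(4) no_triangle[OF path(1,2)] by fastforce
qed

text \<open>
  Bob answers outside \<open>X\<close> while Alice does, and blocks as soon as she enters \<open>X\<close>.
  If the vertices outside \<open>X\<close> run out on Bob's turn, \<open>inside\<close> takes over.
\<close>

lemma bob_wins_outside_closed_set:
  assumes XV: "X \<subseteq> V" and "b \<in> X"
    and closed: "\<And>x y. x \<in> X \<Longrightarrow> E x y \<Longrightarrow> y \<in> X"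
    and two_step: "\<And>x. x \<in> X \<Longrightarrow> \<exists>u w. E x u \<and> E u w \<and> w \<noteq> x"
    and inside: "\<And>c. odd (card (V - X)) \<Longrightarrow> \<forall>x\<in>X. c x = None \<Longrightarrow> \<forall>v\<in>V - X. c v \<noteq> None
      \<Longrightarrow> \<not> alice_wins V E 2 c False"
  shows "\<not> alice_wins V E 2 (\<lambda>_. None) True"
proof -
  define moves where "moves c = card V - uncoloured V c" for c :: "'a \<Rightarrow> nat option"
  have moves_upd: "moves (c(v := Some k)) = Suc (moves c)" if "v \<in> V" "c v = None" for c v k
    unfolding moves_def using card_minus_uncoloured_fun_upd[of V v c k] finite_V that by simp
  have keep_out: False
    if "alice_wins V E 2 c turn" "\<forall>x\<in>X. c x = None" "turn \<longleftrightarrow> even (moves c)" for c turn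
    using that
  proof (induction rule: alice_wins.induct)
    case (all_colored c turn)
    then show ?case using \<open>b \<in> X\<close> XV by blast
  next
    case (alice_move c v k)
    show ?case
    proof (cases "v \<in> X")
      case True
      have "k < 2" using alice_move.hyps(4) by (simp add: legal_def)
      obtain u w where "E v u" "E u w" "w \<noteq> v" using two_step[OF True] by blast
      with True alice_move.prems(1) \<open>k < 2\<close> have "\<not> alice_wins V E 2 (c(v := Some k)) False"
        by (intro bob_wins_after_entering[OF closed]) auto
      then show False using alice_move.hyps(5) by blast
    next
      case False
      then have "\<forall>x\<in>X. (c(v := Some k)) x = None" using alice_move.prems(1) by auto
      moreover have "odd (moves (c(v := Some k)))"
        using alice_move.prems(2) moves_upd[of v c k] alice_move.hyps(2,3) by simp
      ultimately show False using alice_move.IH by blast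
    qed
  next
    case (bob_move c)
    have bob_wins: "alice_wins V E 2 c False"
      by (rule alice_wins.bob_move[OF bob_move.hyps(1)]) (use bob_move.IH in simp)
    show ?case
    proof (cases "\<exists>y\<in>V - X. c y = None")
      case True
      then obtain y where y: "y \<in> V" "y \<notin> X" "c y = None" by blast
      then obtain k where k: "legal E 2 c y k" using bob_move.hyps(1) by (auto simp: blocked_def)
      have "\<forall>x\<in>X. (c(y := Some k)) x = None" "even (moves (c(y := Some k)))"
        using bob_move.prems y moves_upd[of y c k] by auto
      then show False using bob_move.IH[rule_format, OF y(1) y(3) k] by blast
    next
      case False
      then have coloured: "\<forall>v\<in>V - X. c v \<noteq> None" by auto
      then have "{v\<in>V. c v = None} = X" using bob_move.prems(1) XV by blast
      then have "moves c = card (V - X)"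
        using XV finite_V by (simp add: moves_def uncoloured_def card_Diff_subset finite_subset)
      then have "odd (card (V - X))" using bob_move.prems(2) by simp
      then show False using inside[OF _ bob_move.prems(1) coloured] bob_wins by blast
    qed
  qed
  have "moves (\<lambda>_. None) = 0" unfolding moves_def uncoloured_def by simp
  then show ?thesis using keep_out[of "\<lambda>_. None" True] by auto
qed

end

text \<open>
  For the middle edge \<open>bc\<close> of a P4 in a P5-free forest this is the component of \<open>b\<close>.
\<close>

definition edge_nbhd :: "('a \<Rightarrow> 'a \<Rightarrow> bool) \<Rightarrow> 'a \<Rightarrow> 'a \<Rightarrow> 'a set" where
  "edge_nbhd E u v = {u, v} \<union> Collect (E u) \<union> Collect (E v)"

text \<open>
  In a P5-free forest this says that every component containing a P4 is a P4.
\<close>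

definition unbranched_P4s :: "('a \<Rightarrow> 'a \<Rightarrow> bool) \<Rightarrow> bool" where
  "unbranched_P4s E \<longleftrightarrow> (\<forall>a b c d. distinct [a, b, c, d] \<and> E a b \<and> E b c \<and> E c d \<longrightarrow>
      (\<forall>z. E b z \<longrightarrow> z = a \<or> z = c) \<and> (\<forall>z. E c z \<longrightarrow> z = b \<or> z = d))"

locale P5_free_P4 = forest_graph +
  fixes a b c d :: 'a
  assumes no_P5: "\<not> has_P5 E"
    and distinct_abcd: "distinct [a, b, c, d]"
    and ab: "E a b" and bc: "E b c" and cd: "E c d"
begin

lemma leaf_at_b: "E b y \<Longrightarrow> y \<noteq> c \<Longrightarrow> E y z \<Longrightarrow> z = b"
  using leaf_beyond_path_end[OF no_P5 bc cd] distinct_abcd by simp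

lemma leaf_at_c: "E c y \<Longrightarrow> y \<noteq> b \<Longrightarrow> E y z \<Longrightarrow> z = c"
  using leaf_beyond_path_end[OF no_P5 edge_sym[OF bc] edge_sym[OF ab]] distinct_abcd by auto

lemma edge_nbhd_subset: "edge_nbhd E b c \<subseteq> V"
  unfolding edge_nbhd_def using edge_in_V bc by blast

lemma edge_nbhd_closed: "x \<in> edge_nbhd E b c \<Longrightarrow> E x y \<Longrightarrow> y \<in> edge_nbhd E b c"
  unfolding edge_nbhd_def using leaf_at_b leaf_at_c bc by blast

lemma edge_nbhd_two_step:
  assumes "x \<in> edge_nbhd E b c"
  shows "\<exists>u w. E x u \<and> E u w \<and> w \<noteq> x"
proof -
  have ba: "E c b" "E b a" "b \<noteq> d" "c \<noteq> a" using ab bc edge_sym distinct_abcd by auto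
  from assms consider "x = b" | "x = c" | "E b x" "x \<noteq> c" | "E c x" "x \<noteq> b"
    unfolding edge_nbhd_def by blast
  then show ?thesis
    by cases (use ba bc cd edge_sym in blast)+
qed

lemma not_alice_wins_2_if_P4_component:
  assumes "\<forall>z. E b z \<longrightarrow> z = a \<or> z = c" "\<forall>z. E c z \<longrightarrow> z = b \<or> z = d" "even (card V)"
  shows "\<not> alice_wins V E 2 (\<lambda>_. None) True"
proof (rule bob_wins_outside_closed_set[OF edge_nbhd_subset _ edge_nbhd_closed edge_nbhd_two_step])
  show "b \<in> edge_nbhd E b c" by (simp add: edge_nbhd_def)
  have "edge_nbhd E b c = {a, b, c, d}"
    unfolding edge_nbhd_def using assms(1,2) edge_sym[OF ab] bc cd by auto
  then have "card (V - edge_nbhd E b c) = card V - 4"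
    using edge_nbhd_subset finite_V distinct_abcd by (simp add: card_Diff_subset)
  moreover have "4 \<le> card V"
    using card_mono[OF finite_V edge_nbhd_subset] \<open>edge_nbhd E b c = _\<close> distinct_abcd by simp
  ultimately have "even (card (V - edge_nbhd E b c))" using assms(3) by simp
  then show "\<not> alice_wins V E 2 col False" if "odd (card (V - edge_nbhd E b c))" for col
    using that by simp
qed

text \<open>Bob has coloured the leaf \<open>a\<close> with 0 and Alice has answered at \<open>z\<close>.\<close>

lemma bob_answers_in_branching_nbhd:
  assumes f: "E b f" "f \<noteq> a" "f \<noteq> c"
    and col: "col a = Some 0" "col z = Some j" "j < 2" "z = b \<Longrightarrow> j = 1"
      "\<And>y. y \<in> edge_nbhd E b c \<Longrightarrow> y \<noteq> a \<Longrightarrow> y \<noteq> z \<Longrightarrow> col y = None"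
  shows "\<not> alice_wins V E 2 col False"
proof -
  have in_X: "a \<in> edge_nbhd E b c" "b \<in> edge_nbhd E b c" "c \<in> edge_nbhd E b c"
    "d \<in> edge_nbhd E b c" "f \<in> edge_nbhd E b c"
    unfolding edge_nbhd_def using edge_sym[OF ab] cd f(1) by auto
  have distinct: "a \<noteq> b" "a \<noteq> c" "a \<noteq> d" "b \<noteq> c" "b \<noteq> d" "c \<noteq> d" "b \<noteq> f" "d \<noteq> f"
    using distinct_abcd edge_neq[OF f(1)] no_triangle[OF bc cd] edge_sym[OF f(1)] by auto
  consider "z = b" | "z = f" | "z \<noteq> b" "z \<noteq> f" by blast
  then show ?thesis
  proof cases
    case 1
    show ?thesis
    proof (rule bob_wins_by_blocking[OF bc cd])
      show "\<forall>y. E d y \<longrightarrow> col y \<noteq> Some (1 - j)"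
        using leaf_at_c[OF cd] col(5)[of c] in_X(3) distinct 1 by auto
    qed (use 1 col distinct in_X in auto)
  next
    case 2
    show ?thesis
    proof (rule bob_wins_by_blocking[OF ab bc])
      have "\<not> E c f" using no_triangle[OF edge_sym[OF bc] f(1)] edge_sym by blast
      show "\<forall>y. E c y \<longrightarrow> col y \<noteq> Some (1 - 0)"
      proof (intro allI impI)
        fix y assume "E c y"
        then have "y \<in> edge_nbhd E b c" "y \<noteq> z"
          using edge_nbhd_closed[OF in_X(3)] \<open>\<not> E c f\<close> 2 by auto
        then show "col y \<noteq> Some (1 - 0)" using col(1,5) by (cases "y = a") auto
      qed
    qed (use 2 col distinct f in_X in auto)
  next
    case 3
    show ?thesis
    proof (rule bob_wins_by_blocking[OF ab f(1)])
      show "\<forall>y. E f y \<longrightarrow> col y \<noteq> Some (1 - 0)"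
        using leaf_at_b[OF f(1,3)] col(5)[of b] in_X(2) distinct 3 by auto
    qed (use 3 col distinct f in_X in auto)
  qed
qed

lemma bob_wins_inside_branching_nbhd:
  assumes f: "E b f" "f \<noteq> a" "f \<noteq> c"
    and inside: "\<forall>x\<in>edge_nbhd E b c. col x = None" "\<forall>v\<in>V - edge_nbhd E b c. col v \<noteq> None"
  shows "\<not> alice_wins V E 2 col False"
proof
  have in_X: "a \<in> edge_nbhd E b c" "b \<in> edge_nbhd E b c"
    unfolding edge_nbhd_def using edge_sym[OF ab] by auto
  then have in_V: "a \<in> V" "b \<in> V" using edge_nbhd_subset by auto
  have "a \<noteq> c" using distinct_abcd by auto
  assume "alice_wins V E 2 col False"
  moreover have "legal E 2 col a 0"
    using inside(1) in_X(2) leaf_at_b[OF edge_sym[OF ab] \<open>a \<noteq> c\<close>] by (auto simp: legal_def)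
  ultimately have "alice_wins V E 2 (col(a := Some 0)) True"
    using in_V inside(1) in_X unfolding alice_wins_False_iff by blast
  moreover have "(col(a := Some 0)) b = None" using inside(1) in_X edge_neq[OF ab] by simp
  ultimately obtain z j where z: "(col(a := Some 0)) z = None" "legal E 2 (col(a := Some 0)) z j"
    and after: "alice_wins V E 2 (col(a := Some 0, z := Some j)) False"
    using in_V by (auto simp: alice_wins_True_iff)
  have "z \<noteq> a" using z(1) by auto
  have "j < 2" using z(2) by (simp add: legal_def)
  have j1: "j = 1" if "z = b"
    using z(2) edge_sym[OF ab] that \<open>j < 2\<close> by (auto simp: legal_def)
  have "\<not> alice_wins V E 2 (col(a := Some 0, z := Some j)) False"
    by (rule bob_answers_in_branching_nbhd[OF f, where z = z and j = j])
      (use inside(1) \<open>z \<noteq> a\<close> \<open>j < 2\<close> j1 in auto)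
  then show False using after by blast
qed

lemma not_alice_wins_2_if_branching:
  assumes "E b f" "f \<noteq> a" "f \<noteq> c"
  shows "\<not> alice_wins V E 2 (\<lambda>_. None) True"
proof (rule bob_wins_outside_closed_set[OF edge_nbhd_subset _ edge_nbhd_closed edge_nbhd_two_step])
  show "b \<in> edge_nbhd E b c" by (simp add: edge_nbhd_def)
  show "\<not> alice_wins V E 2 col False"
    if "\<forall>x\<in>edge_nbhd E b c. col x = None" "\<forall>v\<in>V - edge_nbhd E b c. col v \<noteq> None" for col
    using bob_wins_inside_branching_nbhd[OF assms that] .
qed

end

context forest_graph
begin

lemma not_alice_wins_2_if_branched:
  assumes "\<not> has_P5 E" "\<not> unbranched_P4s E"
  shows "\<not> alice_wins V E 2 (\<lambda>_. None) True"
proof -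
  obtain a b c d where P4: "distinct [a, b, c, d]" "E a b" "E b c" "E c d"
    and "(\<exists>f. E b f \<and> f \<noteq> a \<and> f \<noteq> c) \<or> (\<exists>f. E c f \<and> f \<noteq> b \<and> f \<noteq> d)"
    using assms(2) unfolding unbranched_P4s_def by blast
  then consider f where "E b f" "f \<noteq> a" "f \<noteq> c" | f where "E c f" "f \<noteq> d" "f \<noteq> b"
    by blast
  then show ?thesis
  proof cases
    case 1
    interpret P5_free_P4 V E a b c d
      using assms(1) P4 by unfold_locales
    from 1 show ?thesis by (rule not_alice_wins_2_if_branching)
  next
    case 2
    interpret P5_free_P4 V E d c b a
      using assms(1) P4 edge_sym by unfold_locales auto
    from 2 show ?thesis by (rule not_alice_wins_2_if_branching)
  qed
qed

lemma not_alice_wins_2_if_even_card: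
  assumes "\<not> has_P5 E" "unbranched_P4s E" "has_P4 E" "even (card V)"
  shows "\<not> alice_wins V E 2 (\<lambda>_. None) True"
proof -
  obtain a b c d where P4: "distinct [a, b, c, d]" "E a b" "E b c" "E c d"
    using assms(3) unfolding has_P4_def by blast
  interpret P5_free_P4 V E a b c d
    using assms(1) P4 by unfold_locales
  show ?thesis
    using assms(2,4) P4 unfolding unbranched_P4s_def
    by (intro not_alice_wins_2_if_P4_component) blast+
qed

end

section \<open>Alice's strategy\<close>

lemma even_card_if_perfect_matching:
  assumes "finite U" "symp M" "\<And>a. \<not> M a a" "\<And>a. a \<in> U \<Longrightarrow> \<exists>!b. b \<in> U \<and> M a b"
  shows "even (card U)"
  using assms(1,4)
proof (induction "card U" arbitrary: U rule: less_induct)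
  case less
  show ?case
  proof (cases "U = {}")
    case False
    then obtain a where a: "a \<in> U" by auto
    then obtain b where b: "b \<in> U" "M a b" using less.prems(2) by blast
    have "a \<noteq> b" using b(2) assms(3) by auto
    let ?U = "U - {a, b}"
    have "card ?U = card U - 2"
      using a b \<open>a \<noteq> b\<close> less.prems(1) by (simp add: card_Diff_subset)
    moreover have "2 \<le> card U"
      using a b \<open>a \<noteq> b\<close> less.prems(1) card_mono[of U "{a, b}"] by simp
    ultimately have card_U: "card U = card ?U + 2" by simp
    have uniq: "\<exists>!y. y \<in> ?U \<and> M x y" if x: "x \<in> ?U" for x
    proof -
      obtain y where y: "y \<in> U" "M x y" "\<And>y'. y' \<in> U \<Longrightarrow> M x y' \<Longrightarrow> y' = y"
        using less.prems(2) x by (metis DiffD1)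
      have "M b a" "M y x" using b(2) y(2) assms(2) by (auto dest: sympD)
      then have "y \<noteq> a" "y \<noteq> b"
        using less.prems(2)[OF a] less.prems(2)[OF b(1)] a b x y(1) by blast+
      then show ?thesis using y by blast
    qed
    have "even (card ?U)" using less.hyps[of ?U] card_U less.prems(1) uniq by simp
    then show ?thesis using card_U by simp
  qed simp
qed

text \<open>
  Alice keeps every uncoloured vertex safe: its neighbours are either all uncoloured, or all
  coloured with a colour left free for it.
\<close>

definition safe :: "('a \<Rightarrow> 'a \<Rightarrow> bool) \<Rightarrow> ('a \<Rightarrow> nat option) \<Rightarrow> 'a \<Rightarrow> bool" where
  "safe E c v \<longleftrightarrow> (\<forall>w. E v w \<longrightarrow> c w = None) \<or> ((\<forall>w. E v w \<longrightarrow> c w \<noteq> None) \<and> (\<exists>k. legal E 2 c v k))"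

text \<open>
  Positions with Bob to move that Alice maintains. The parity rules out the situation in
  which every uncoloured vertex lies on an uncoloured P4 when it is Alice's turn.
\<close>

definition good_position :: "'a set \<Rightarrow> ('a \<Rightarrow> 'a \<Rightarrow> bool) \<Rightarrow> ('a \<Rightarrow> nat option) \<Rightarrow> bool" where
  "good_position V E c \<longleftrightarrow> (\<forall>v\<in>V. c v = None \<longrightarrow> safe E c v) \<and> (has_P4 E \<longrightarrow> even (uncoloured V c))"

lemma legal_if_safe: "safe E c v \<Longrightarrow> \<exists>k. legal E 2 c v k"
  unfolding safe_def legal_def by (auto intro: exI[of _ 0])

lemma legal_other_colour:
  assumes "\<And>w. E v w \<Longrightarrow> c w = None \<or> c w = Some k" "k < 2"
  shows "legal E 2 c v (1 - k)"
proof -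
  have "1 - k \<noteq> k" using assms(2) by arith
  then show ?thesis unfolding legal_def using assms by fastforce
qed

lemma safe_if_neighbours_coloured: "(\<And>w. E v w \<Longrightarrow> c w = Some k) \<Longrightarrow> k < 2 \<Longrightarrow> safe E c v"
  unfolding safe_def using legal_other_colour[of E v c k] by blast

lemma safe_neighbour_uncoloured:
  "safe E c v \<Longrightarrow> E v w \<Longrightarrow> c w = None \<Longrightarrow> E v w' \<Longrightarrow> c w' = None"
  unfolding safe_def by auto

lemma safe_fun_upd_if_not_adjacent: "\<not> E v x \<Longrightarrow> safe E (c(x := k)) v \<longleftrightarrow> safe E c v"
  unfolding safe_def legal_def by (metis fun_upd_other)

lemma not_blocked_if_safe: "(\<And>v. v \<in> V \<Longrightarrow> c v = None \<Longrightarrow> safe E c v) \<Longrightarrow> \<not> blocked V E 2 c"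
  unfolding blocked_def using legal_if_safe by meson

text \<open>
  In a forest the conditions \<open>x1 \<noteq> x3\<close> and \<open>x2 \<noteq> x4\<close> make the walk a path
  (see \<open>distinct_if_walk4\<close>).
\<close>

definition on_P4_in :: "('a \<Rightarrow> 'a \<Rightarrow> bool) \<Rightarrow> 'a set \<Rightarrow> 'a \<Rightarrow> bool" where
  "on_P4_in E U v \<longleftrightarrow> (\<exists>x1 x2 x3 x4. v \<in> {x1, x2, x3, x4} \<and> {x1, x2, x3, x4} \<subseteq> U \<and>
     E x1 x2 \<and> E x2 x3 \<and> E x3 x4 \<and> x1 \<noteq> x3 \<and> x2 \<noteq> x4)"

context sgraph
begin

lemma not_blocked_after_move:
  assumes safe: "\<forall>v\<in>V. c v = None \<longrightarrow> safe E c v" and x: "c x = None" "legal E 2 c x k"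
  shows "\<not> blocked V E 2 (c(x := Some k))"
proof
  assume "blocked V E 2 (c(x := Some k))"
  then obtain v where v: "v \<in> V" "(c(x := Some k)) v = None"
    and none: "\<forall>j. \<not> legal E 2 (c(x := Some k)) v j"
    unfolding blocked_def by blast
  then have "c v = None" by (auto split: if_splits)
  then have "safe E c v" using safe v(1) by blast
  show False
  proof (cases "E v x")
    case True
    have "k < 2" using x(2) by (simp add: legal_def)
    have "c w = None" if "E v w" for w
      using safe_neighbour_uncoloured[OF \<open>safe E c v\<close> True x(1) that] .
    then have "legal E 2 (c(x := Some k)) v (1 - k)"
      using \<open>k < 2\<close> by (intro legal_other_colour) auto
    then show False using none by blast
  next
    case False
    then have "legal E 2 (c(x := Some k)) v j \<longleftrightarrow> legal E 2 c v j" for j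
      by (auto simp: legal_def)
    then show False using none legal_if_safe[OF \<open>safe E c v\<close>] by blast
  qed
qed

lemma good_position_after_two_moves:
  assumes good: "good_position V E c"
    and moves: "x \<in> V" "c x = None" "y \<in> V" "(c(x := Some k)) y = None"
    and safe: "\<And>v. v \<in> V \<Longrightarrow> (c(x := Some k, y := Some j)) v = None \<Longrightarrow>
      safe E (c(x := Some k, y := Some j)) v"
  shows "good_position V E (c(x := Some k, y := Some j))"
proof -
  have "Suc (Suc (uncoloured V (c(x := Some k, y := Some j)))) = uncoloured V c"
    using moves uncoloured_fun_upd[of V x c k, OF finite_V]
      uncoloured_fun_upd[of V y "c(x := Some k)" j, OF finite_V] by simp
  then show ?thesis using good safe unfolding good_position_def by (metis even_Suc_Suc_iff)
qed

lemma safe_after_quiet_move: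
  assumes safe: "\<forall>v\<in>V. c v = None \<longrightarrow> safe E c v" and x: "c x = None" "k < 2"
    and quiet: "\<And>u w. E x u \<Longrightarrow> c u = None \<Longrightarrow> E u w \<Longrightarrow> c w = None \<Longrightarrow> w = x"
  shows "\<forall>v\<in>V. (c(x := Some k)) v = None \<longrightarrow> safe E (c(x := Some k)) v"
proof (intro ballI impI)
  fix v assume v: "v \<in> V" "(c(x := Some k)) v = None"
  then have "c v = None" by (auto split: if_splits)
  then have "safe E c v" using safe v(1) by blast
  show "safe E (c(x := Some k)) v"
  proof (cases "E v x")
    case True
    have "z = x" if "E v z" for z
      using quiet[OF edge_sym[OF True] \<open>c v = None\<close> that]
        safe_neighbour_uncoloured[OF \<open>safe E c v\<close> True x(1) that] .
    then show ?thesis using x(2) by (intro safe_if_neighbours_coloured[where k = k]) auto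
  next
    case False
    then show ?thesis using \<open>safe E c v\<close> by (simp add: safe_fun_upd_if_not_adjacent)
  qed
qed

lemma good_position_after_leafy_move:
  assumes safe: "\<forall>v\<in>V. c v = None \<longrightarrow> safe E c v"
    and parity: "has_P4 E \<Longrightarrow> odd (uncoloured V c)"
    and y: "y \<in> V" "c y = None" "legal E 2 c y j"
    and leafy: "\<And>w z. E y w \<Longrightarrow> c w = None \<Longrightarrow> E w z \<Longrightarrow> z = y"
  shows "good_position V E (c(y := Some j))"
  unfolding good_position_def
proof (intro conjI ballI impI)
  have "j < 2" using y(3) by (simp add: legal_def)
  fix v assume v: "v \<in> V" "(c(y := Some j)) v = None"
  then have "v \<noteq> y" "c v = None" by (auto split: if_splits)
  show "safe E (c(y := Some j)) v"
  proof (cases "E v y")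
    case True
    with leafy \<open>c v = None\<close> have "E v w \<Longrightarrow> w = y" for w
      using edge_sym by blast
    then show ?thesis
      using \<open>j < 2\<close> by (intro safe_if_neighbours_coloured[where k = j]) auto
  next
    case False
    then have "safe E (c(y := Some j)) v \<longleftrightarrow> safe E c v" by (rule safe_fun_upd_if_not_adjacent)
    then show ?thesis using safe v(1) \<open>c v = None\<close> by simp
  qed
next
  assume "has_P4 E"
  then show "even (uncoloured V (c(y := Some j)))"
    using parity uncoloured_fun_upd[of V y c j, OF finite_V y(1,2)] by (metis even_Suc)
qed

lemma on_P4_in_uncoloured:
  assumes safe: "\<forall>v\<in>V. c v = None \<longrightarrow> safe E c v"
    and extend: "\<And>y. y \<in> V \<Longrightarrow> c y = None \<Longrightarrow> \<exists>w z. E y w \<and> c w = None \<and> E w z \<and> z \<noteq> y"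
    and v: "v \<in> V" "c v = None"
  shows "on_P4_in E {v\<in>V. c v = None} v"
proof -
  obtain w z where w: "E v w" "c w = None" "E w z" "z \<noteq> v" using extend[OF v] by blast
  have "w \<in> V" using edge_in_V(2)[OF w(1)] .
  then obtain m m' where m: "E w m" "c m = None" "E m m'" "m' \<noteq> w" using extend w(2) by blast
  have "m \<in> V" "m' \<in> V" "z \<in> V" using edge_in_V(2) m(1,3) w(3) by auto
  have "safe E c m" using safe \<open>m \<in> V\<close> m(2) by blast
  from safe_neighbour_uncoloured[OF this edge_sym[OF m(1)] w(2) m(3)] have "c m' = None" .
  show ?thesis
  proof (cases "m = v")
    case True
    have "safe E c w" using safe \<open>w \<in> V\<close> w(2) by blast
    from safe_neighbour_uncoloured[OF this edge_sym[OF w(1)] v(2) w(3)] have "c z = None" .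
    with True show ?thesis
      using w m v \<open>c m' = None\<close> \<open>m' \<in> V\<close> \<open>z \<in> V\<close> \<open>w \<in> V\<close> edge_sym[of w z]
      unfolding on_P4_in_def by (intro exI[of _ z] exI[of _ w] exI[of _ v] exI[of _ m']) auto
  next
    case False
    then show ?thesis
      using w m v \<open>c m' = None\<close> \<open>m' \<in> V\<close> \<open>m \<in> V\<close> \<open>w \<in> V\<close>
      unfolding on_P4_in_def by (intro exI[of _ v] exI[of _ w] exI[of _ m] exI[of _ m']) auto
  qed
qed

end

locale unbranched_forest = forest_graph +
  assumes no_P5: "\<not> has_P5 E"
    and unbranched: "unbranched_P4s E"
begin

lemma P4_neighbours:
  assumes "E a b" "E b c" "E c d" "a \<noteq> c" "b \<noteq> d"
  shows "E a z \<Longrightarrow> z = b" "E b z \<Longrightarrow> z = a \<or> z = c" "E c z \<Longrightarrow> z = b \<or> z = d" "E d z \<Longrightarrow> z = c"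
proof -
  have "distinct [a, b, c, d]" using distinct_if_walk4[OF assms] .
  then show "E b z \<Longrightarrow> z = a \<or> z = c" "E c z \<Longrightarrow> z = b \<or> z = d"
    using unbranched assms(1-3) unfolding unbranched_P4s_def by blast+
  show "E a z \<Longrightarrow> z = b"
    using leaf_beyond_path_end[OF no_P5 assms(2,3,5) edge_sym[OF assms(1)] assms(4)] .
  show "E d z \<Longrightarrow> z = c"
    using leaf_beyond_path_end[OF no_P5 edge_sym[OF assms(2)] edge_sym[OF assms(1)]
        assms(4)[symmetric] assms(3) assms(5)[symmetric]] .
qed

lemma even_card_if_covered_by_P4s:
  assumes "finite U"
    and cover: "\<And>v. v \<in> U \<Longrightarrow> on_P4_in E U v"
  shows "even (card U)"
proof -
  define M where "M a b \<longleftrightarrow> E a b \<and> ((\<forall>x. E a x \<longrightarrow> x = b) \<or> (\<forall>x. E b x \<longrightarrow> x = a))" for a b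
  have partner: "M x1 b \<longleftrightarrow> b = x2" "M x2 b \<longleftrightarrow> b = x1"
    if P4: "E x1 x2" "E x2 x3" "E x3 x4" "x1 \<noteq> x3" "x2 \<noteq> x4" for x1 x2 x3 x4 b
  proof -
    note N = P4_neighbours[OF P4]
    show "M x1 b \<longleftrightarrow> b = x2" unfolding M_def using N(1) P4(1) by blast
    have "\<not> M x2 x3" unfolding M_def using edge_sym[OF P4(1)] P4(3-5) by blast
    then show "M x2 b \<longleftrightarrow> b = x1" unfolding M_def using N(1,2) edge_sym[OF P4(1)] by blast
  qed
  show ?thesis
  proof (rule even_card_if_perfect_matching[OF assms(1)])
    show "symp M" by (intro sympI) (auto simp: M_def dest: edge_sym)
    show "\<not> M a a" for a by (simp add: M_def edge_irrefl)
    fix v assume "v \<in> U"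
    from cover[OF this, unfolded on_P4_in_def] obtain x1 x2 x3 x4
      where v: "v \<in> {x1, x2, x3, x4}" and sub: "{x1, x2, x3, x4} \<subseteq> U"
      and P4: "E x1 x2" "E x2 x3" "E x3 x4" "x1 \<noteq> x3" "x2 \<noteq> x4"
      by (elim exE conjE)
    have rev: "E x4 x3" "E x3 x2" "E x2 x1" "x4 \<noteq> x2" "x3 \<noteq> x1"
      using P4(1-3) edge_sym P4(4,5)[symmetric] by blast+
    show "\<exists>!b. b \<in> U \<and> M v b"
      using v sub partner[OF P4] partner[OF rev] by auto
  qed
qed

text \<open>
  Alice colours a vertex whose uncoloured neighbours are leaves. If there is none, the
  uncoloured vertices are covered by P4s and their number is even, against the parity.
\<close>

lemma alice_move_to_good:
  assumes safe: "\<forall>v\<in>V. c v = None \<longrightarrow> safe E c v"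
    and parity: "has_P4 E \<Longrightarrow> odd (uncoloured V c)"
    and v0: "v0 \<in> V" "c v0 = None"
  shows "\<exists>y j. y \<in> V \<and> c y = None \<and> legal E 2 c y j \<and> good_position V E (c(y := Some j))"
proof (cases "\<exists>y\<in>V. c y = None \<and> (\<forall>w z. E y w \<longrightarrow> c w = None \<longrightarrow> E w z \<longrightarrow> z = y)")
  case True
  then obtain y where y: "y \<in> V" "c y = None"
    and leafy: "\<forall>w z. E y w \<longrightarrow> c w = None \<longrightarrow> E w z \<longrightarrow> z = y" by blast
  have "safe E c y" using safe y by blast
  then obtain j where j: "legal E 2 c y j" using legal_if_safe by metis
  moreover have "good_position V E (c(y := Some j))"
    using safe parity y \<open>legal E 2 c y j\<close> leafy[rule_format]
    by (rule good_position_after_leafy_move)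
  ultimately show ?thesis using y by blast
next
  case False
  then have extend: "\<exists>w z. E y w \<and> c w = None \<and> E w z \<and> z \<noteq> y" if "y \<in> V" "c y = None" for y
    using that by blast
  have cover: "on_P4_in E {v\<in>V. c v = None} v" if "v \<in> V" "c v = None" for v
    using safe extend that by (rule on_P4_in_uncoloured)
  have "even (uncoloured V c)" unfolding uncoloured_def
  proof (rule even_card_if_covered_by_P4s)
    show "finite {v\<in>V. c v = None}" using finite_V by simp
  qed (use cover in simp)
  moreover from cover[OF v0, unfolded on_P4_in_def] obtain x1 x2 x3 x4
    where "E x1 x2" "E x2 x3" "E x3 x4" "x1 \<noteq> x3" "x2 \<noteq> x4" by blast
  then have "has_P4 E" unfolding has_P4_def using distinct_if_walk4 by blast
  ultimately show ?thesis using parity by blast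
qed

lemma alice_answers_on_P4:
  assumes good: "good_position V E c" and x: "c x = None" "legal E 2 c x k"
    and P4: "E x u" "E u y" "E y y'" "x \<noteq> y" "u \<noteq> y'" and "c u = None"
  shows "y \<in> V \<and> (c(x := Some k)) y = None \<and> legal E 2 (c(x := Some k)) y k
    \<and> good_position V E (c(x := Some k, y := Some k))"
proof -
  note N = P4_neighbours[OF P4]
  have safe: "\<forall>v\<in>V. c v = None \<longrightarrow> safe E c v" using good by (simp add: good_position_def)
  have "k < 2" using x(2) by (simp add: legal_def)
  have in_V: "x \<in> V" "u \<in> V" "y \<in> V" using edge_in_V P4(1,2) by blast+
  have "safe E c u" using safe in_V(2) \<open>c u = None\<close> by blast
  from safe_neighbour_uncoloured[OF this edge_sym[OF P4(1)] x(1) P4(2)] have "c y = None" .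
  then have "safe E c y" using safe in_V(3) by blast
  from safe_neighbour_uncoloured[OF this edge_sym[OF P4(2)] \<open>c u = None\<close> P4(3)]
  have "c y' = None" .
  have "x \<noteq> y'" using distinct_if_walk4[OF P4] by simp
  have c1y: "(c(x := Some k)) y = None" using \<open>c y = None\<close> P4(4) by simp
  have "legal E 2 (c(x := Some k)) y k"
    unfolding legal_def using \<open>k < 2\<close> N(3) \<open>c u = None\<close> \<open>c y' = None\<close> \<open>x \<noteq> y'\<close> edge_neq[OF P4(1)]
    by fastforce
  moreover have "good_position V E (c(x := Some k, y := Some k))"
  proof (rule good_position_after_two_moves[OF good in_V(1) x(1) in_V(3) c1y])
    fix v assume v: "v \<in> V" "(c(x := Some k, y := Some k)) v = None"
    then have "v \<noteq> x" "v \<noteq> y" "c v = None" by (auto split: if_splits)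
    consider "v = u" | "v = y'" | "\<not> E v x" "\<not> E v y"
      using N(1,3) edge_sym \<open>v \<noteq> x\<close> by blast
    then show "safe E (c(x := Some k, y := Some k)) v"
    proof cases
      case 1
      then show ?thesis
        using N(2) \<open>k < 2\<close> by (intro safe_if_neighbours_coloured[where k = k]) auto
    next
      case 2
      then show ?thesis
        using N(4) \<open>k < 2\<close> P4(4) by (intro safe_if_neighbours_coloured[where k = k]) auto
    next
      case 3
      then show ?thesis using safe v(1) \<open>c v = None\<close> by (simp add: safe_fun_upd_if_not_adjacent)
    qed
  qed
  ultimately show ?thesis using in_V(3) c1y by blast
qed

lemma alice_answers_at_centre:
  assumes good: "good_position V E c" and x: "c x = None" "legal E 2 c x k"
    and u: "E x u" "c u = None" "E u w" "w \<noteq> x"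
    and leaves: "\<And>y z. E u y \<Longrightarrow> y \<noteq> x \<Longrightarrow> E y z \<Longrightarrow> z = u"
  shows "u \<in> V \<and> (c(x := Some k)) u = None \<and> legal E 2 (c(x := Some k)) u (1 - k)
    \<and> good_position V E (c(x := Some k, u := Some (1 - k)))"
proof -
  have safe: "\<forall>v\<in>V. c v = None \<longrightarrow> safe E c v" using good by (simp add: good_position_def)
  have "k < 2" using x(2) by (simp add: legal_def)
  have "u \<in> V" "x \<in> V" using edge_in_V u(1) by blast+
  have "safe E c u" using safe \<open>u \<in> V\<close> u(2) by blast
  have nbrs_u: "c y = None" if "E u y" for y
    using safe_neighbour_uncoloured[OF \<open>safe E c u\<close> edge_sym[OF u(1)] x(1) that] .
  have c1u: "(c(x := Some k)) u = None" using u(2) edge_neq[OF u(1)] by simp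
  have "legal E 2 (c(x := Some k)) u (1 - k)"
    using nbrs_u \<open>k < 2\<close> by (intro legal_other_colour) auto
  moreover have "good_position V E (c(x := Some k, u := Some (1 - k)))"
  proof (rule good_position_after_two_moves[OF good \<open>x \<in> V\<close> x(1) \<open>u \<in> V\<close> c1u])
    fix v assume v: "v \<in> V" "(c(x := Some k, u := Some (1 - k))) v = None"
    then have "v \<noteq> x" "v \<noteq> u" "c v = None" by (auto split: if_splits)
    consider "E v u" | "E v x" | "\<not> E v x" "\<not> E v u" by blast
    then show "safe E (c(x := Some k, u := Some (1 - k))) v"
    proof cases
      case 1
      have "z = u" if "E v z" for z
        by (rule leaves[OF edge_sym[OF 1] \<open>v \<noteq> x\<close> that])
      then show ?thesis by (intro safe_if_neighbours_coloured[where k = "1 - k"]) auto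
    next
      case 2
      have "z = x" if "E v z" for z
        using leaf_beyond_path_end[OF no_P5 u(1,3) u(4)[symmetric] edge_sym[OF 2] \<open>v \<noteq> u\<close> that] .
      then show ?thesis
        using edge_neq[OF u(1)] \<open>k < 2\<close> by (intro safe_if_neighbours_coloured[where k = k]) auto
    next
      case 3
      then show ?thesis using safe v(1) \<open>c v = None\<close> by (simp add: safe_fun_upd_if_not_adjacent)
    qed
  qed
  ultimately show ?thesis using \<open>u \<in> V\<close> c1u by blast
qed

text \<open>
  Let \<open>u\<close> be an uncoloured neighbour of Bob's vertex \<open>x\<close> with a further uncoloured
  neighbour. If \<open>x u y y'\<close> is a P4, Alice gives \<open>y\<close> Bob's colour; otherwise \<open>u\<close> is the
  centre of a star and she gives \<open>u\<close> the other colour. If there is no such \<open>u\<close>, Bob's move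
  has left every uncoloured vertex safe.
\<close>


lemma alice_response:
  assumes good: "good_position V E c" and x: "x \<in> V" "c x = None" "legal E 2 c x k"
    and unfinished: "v0 \<in> V" "(c(x := Some k)) v0 = None"
  shows "\<exists>y j. y \<in> V \<and> (c(x := Some k)) y = None \<and> legal E 2 (c(x := Some k)) y j
    \<and> good_position V E (c(x := Some k, y := Some j))"
proof (cases "\<exists>u w. E x u \<and> c u = None \<and> E u w \<and> w \<noteq> x \<and> c w = None")
  case True
  then obtain u w where u: "E x u" "c u = None" "E u w" "w \<noteq> x" by blast
  show ?thesis
  proof (cases "\<exists>y y'. E u y \<and> y \<noteq> x \<and> E y y' \<and> y' \<noteq> u")
    case True
    then obtain y y' where "E u y" "y \<noteq> x" "E y y'" "y' \<noteq> u" by blast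
    with alice_answers_on_P4[OF good x(2,3) u(1)] u(2) show ?thesis by blast
  next
    case False
    then have "\<And>y z. E u y \<Longrightarrow> y \<noteq> x \<Longrightarrow> E y z \<Longrightarrow> z = u" by blast
    with alice_answers_at_centre[OF good x(2,3) u] show ?thesis by blast
  qed
next
  case False
  have safe: "\<forall>v\<in>V. c v = None \<longrightarrow> safe E c v" and even: "has_P4 E \<Longrightarrow> even (uncoloured V c)"
    using good by (simp_all add: good_position_def)
  have "k < 2" using x(3) by (simp add: legal_def)
  with False have "\<forall>v\<in>V. (c(x := Some k)) v = None \<longrightarrow> safe E (c(x := Some k)) v"
    using safe_after_quiet_move[OF safe x(2)] by blast
  moreover have "odd (uncoloured V (c(x := Some k)))" if "has_P4 E"
    using even[OF that] uncoloured_fun_upd[of V x c k, OF finite_V x(1,2)] by (metis even_Suc)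
  ultimately show ?thesis using unfinished by (rule alice_move_to_good)
qed

lemma alice_wins_from_good_position: "good_position V E c \<Longrightarrow> alice_wins V E 2 c False"
proof (induction "uncoloured V c" arbitrary: c rule: less_induct)
  case (less c)
  have safe: "\<forall>v\<in>V. c v = None \<longrightarrow> safe E c v"
    using less.prems by (simp add: good_position_def)
  show ?case
  proof (cases "\<forall>v\<in>V. c v \<noteq> None")
    case True
    then show ?thesis by (rule alice_wins.all_colored)
  next
    case False
    show ?thesis
    proof (rule alice_wins.bob_move)
      show "\<not> blocked V E 2 c" using safe by (intro not_blocked_if_safe) auto
      show "\<forall>x k. x \<in> V \<longrightarrow> c x = None \<longrightarrow> legal E 2 c x k \<longrightarrow> alice_wins V E 2 (c(x := Some k)) True"
      proof (intro allI impI)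
        fix x k assume x: "x \<in> V" "c x = None" "legal E 2 c x k"
        show "alice_wins V E 2 (c(x := Some k)) True"
        proof (cases "\<forall>v\<in>V. (c(x := Some k)) v \<noteq> None")
          case True
          then show ?thesis by (rule alice_wins.all_colored)
        next
          case False
          then obtain v0 where "v0 \<in> V" "(c(x := Some k)) v0 = None" by blast
          from alice_response[OF less.prems x this] obtain y j where y: "y \<in> V"
            "(c(x := Some k)) y = None" "legal E 2 (c(x := Some k)) y j"
            "good_position V E (c(x := Some k, y := Some j))" by blast
          have "uncoloured V (c(x := Some k, y := Some j)) < uncoloured V c"
            using uncoloured_fun_upd[of V x c k, OF finite_V x(1,2)]
              uncoloured_fun_upd[of V y "c(x := Some k)" j, OF finite_V y(1,2)] by simp
          with less.hyps y(4) have "alice_wins V E 2 (c(x := Some k, y := Some j)) False" by blast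
          moreover have "\<not> blocked V E 2 (c(x := Some k))"
            using not_blocked_after_move[OF safe x(2,3)] .
          ultimately show ?thesis using alice_wins.alice_move[OF _ y(1-3)] by blast
        qed
      qed
    qed
  qed
qed

lemma alice_wins_2:
  assumes "has_P4 E \<Longrightarrow> odd (card V)"
  shows "alice_wins V E 2 (\<lambda>_. None) True"
proof (cases "V = {}")
  case True
  then show ?thesis by (intro alice_wins.all_colored) simp
next
  case False
  then obtain v0 where v0: "v0 \<in> V" by blast
  have safe: "\<forall>v\<in>V. (\<lambda>_. None) v = None \<longrightarrow> safe E (\<lambda>_. None) v"
    by (simp add: safe_def)
  have "odd (uncoloured V (\<lambda>_. None))" if "has_P4 E"
    using assms[OF that] by (simp add: uncoloured_def)
  from alice_move_to_good[OF safe this] v0 obtain y j where y: "y \<in> V" "legal E 2 (\<lambda>_. None) y j"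
    "good_position V E ((\<lambda>_. None)(y := Some j))" by blast
  have "alice_wins V E 2 ((\<lambda>_. None)(y := Some j)) False"
    using alice_wins_from_good_position[OF y(3)] .
  moreover have "\<not> blocked V E 2 (\<lambda>_. None)"
    using safe by (intro not_blocked_if_safe) auto
  ultimately show ?thesis using alice_wins.alice_move[OF _ y(1) _ y(2)] by simp
qed

end

section \<open>Components of diameter 3\<close>

lemma relpowp_2_iff: "(R ^^ 2) x y \<longleftrightarrow> (\<exists>a. R x a \<and> R a y)"
  by (auto simp: numeral_2_eq_2 relpowp_Suc_left OO_def)

lemma relpowp_3_iff: "(R ^^ 3) x y \<longleftrightarrow> (\<exists>a b. R x a \<and> R a b \<and> R b y)"
  by (auto simp: numeral_3_eq_3 relpowp_Suc_left OO_def)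

lemma relpowp_le_3_if_walk:
  assumes "u = p \<or> R u p" "p = q \<or> R p q" "q = v \<or> R q v"
  shows "\<exists>n\<le>3. (R ^^ n) u v"
proof -
  have step: "\<exists>n\<le>1. (R ^^ n) x y" if "x = y \<or> R x y" for x y
    using that relpowp_1[of R] by (metis le_refl relpowp.simps(1) zero_le)
  obtain n1 n2 n3 where "(R ^^ n1) u p" "(R ^^ n2) p q" "(R ^^ n3) q v" "n1 \<le> 1" "n2 \<le> 1" "n3 \<le> 1"
    using step[OF assms(1)] step[OF assms(2)] step[OF assms(3)] by blast
  then have "(R ^^ (n1 + n2 + n3)) u v" unfolding relpowp_add by blast
  with \<open>n1 \<le> 1\<close> \<open>n2 \<le> 1\<close> \<open>n3 \<le> 1\<close> show ?thesis by (intro exI[of _ "n1 + n2 + n3"]) simp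
qed

lemma gdist_le: "(E ^^ n) u v \<Longrightarrow> gdist E u v \<le> n"
  unfolding gdist_def by (rule Least_le)

lemma gdist_eqI: "(E ^^ n) u v \<Longrightarrow> (\<And>m. m < n \<Longrightarrow> \<not> (E ^^ m) u v) \<Longrightarrow> gdist E u v = n"
  unfolding gdist_def by (rule Least_equality) (auto simp: not_less[symmetric])

lemma gdist_relpowp:
  assumes "E\<^sup>*\<^sup>* u v"
  shows "(E ^^ gdist E u v) u v" "m < gdist E u v \<Longrightarrow> \<not> (E ^^ m) u v"
proof -
  obtain n where "(E ^^ n) u v" using assms rtranclp_imp_relpowp by metis
  then show "(E ^^ gdist E u v) u v" unfolding gdist_def by (rule LeastI)
  show "m < gdist E u v \<Longrightarrow> \<not> (E ^^ m) u v" unfolding gdist_def by (rule not_less_Least)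
qed

lemma diameter_eqI:
  assumes "finite C" "\<And>u v. u \<in> C \<Longrightarrow> v \<in> C \<Longrightarrow> gdist E u v \<le> n"
    and "u0 \<in> C" "v0 \<in> C" "gdist E u0 v0 = n"
  shows "diameter E C = n"
  unfolding diameter_def
proof (rule Max_eqI)
  have "{gdist E u v | u v. u \<in> C \<and> v \<in> C} = (\<lambda>(u, v). gdist E u v) ` (C \<times> C)" by auto
  then show "finite {gdist E u v | u v. u \<in> C \<and> v \<in> C}" using assms(1) by simp
qed (use assms(2-5) in auto)

lemma diameter_attained:
  assumes "finite C" "v \<in> C"
  shows "\<exists>u\<in>C. \<exists>w\<in>C. gdist E u w = diameter E C"
proof -
  have "{gdist E u v | u v. u \<in> C \<and> v \<in> C} = (\<lambda>(u, v). gdist E u v) ` (C \<times> C)" by auto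
  then have "finite {gdist E u v | u v. u \<in> C \<and> v \<in> C}" using assms(1) by simp
  then have "diameter E C \<in> {gdist E u v | u v. u \<in> C \<and> v \<in> C}"
    unfolding diameter_def using assms(2) by (intro Max_in) auto
  then obtain u w where "u \<in> C" "w \<in> C" "diameter E C = gdist E u w" by blast
  then show ?thesis by metis
qed

lemma component_subset:
  "v \<in> S \<Longrightarrow> (\<And>x y. x \<in> S \<Longrightarrow> E x y \<Longrightarrow> y \<in> S) \<Longrightarrow> component E v \<subseteq> S"
  unfolding component_def by (auto elim: rtranclp_induct)

lemma induced_is_path_degree_le_2:
  assumes "induced_is_path E C" "b \<in> C" "a \<in> C" "c \<in> C" "f \<in> C" "E b a" "E b c" "E b f"
  shows "a = c \<or> a = f \<or> c = f"
proof -
  obtain p where "p \<noteq> [] \<and> distinct p \<and> set p = C \<and> (\<forall>u\<in>C. \<forall>v\<in>C. E u v \<longleftrightarrow>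
      (\<exists>i. Suc i < length p \<and> ((u = p ! i \<and> v = p ! Suc i) \<or> (v = p ! i \<and> u = p ! Suc i))))"
    using assms(1) unfolding induced_is_path_def by (rule exE)
  then have p: "distinct p" "set p = C"
    and edge: "\<forall>u\<in>C. \<forall>v\<in>C. E u v \<longleftrightarrow>
      (\<exists>i. Suc i < length p \<and> ((u = p ! i \<and> v = p ! Suc i) \<or> (v = p ! i \<and> u = p ! Suc i)))"
    by - (elim conjE, assumption)+
  obtain i where i: "i < length p" "b = p ! i" using assms(2) p(2) by (metis in_set_conv_nth)
  have "y = p ! Suc i \<or> y = p ! (i - 1)" if "y \<in> C" "E b y" for y
  proof -
    have "\<exists>j. Suc j < length p \<and> ((b = p ! j \<and> y = p ! Suc j) \<or> (y = p ! j \<and> b = p ! Suc j))"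
      using edge assms(2) that by simp
    then obtain j where j: "Suc j < length p"
      "(b = p ! j \<and> y = p ! Suc j) \<or> (y = p ! j \<and> b = p ! Suc j)" by blast
    from j(2) show ?thesis
    proof
      assume "b = p ! j \<and> y = p ! Suc j"
      then have "j = i" using i p(1) j(1) by (simp add: nth_eq_iff_index_eq)
      then show ?thesis using \<open>b = p ! j \<and> y = p ! Suc j\<close> by simp
    next
      assume "y = p ! j \<and> b = p ! Suc j"
      then have "Suc j = i" using i p(1) j(1) by (simp add: nth_eq_iff_index_eq)
      then show ?thesis using \<open>y = p ! j \<and> b = p ! Suc j\<close> by auto
    qed
  qed
  then show ?thesis using assms(3-8) by blast
qed

context sgraph
begin

lemma component_eq_if_mem: "u \<in> component E v \<Longrightarrow> component E u = component E v"
  unfolding component_def using sympD[OF symp_rtranclp[OF symp_E]]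
  by (auto intro: rtranclp_trans)

end

context P5_free_P4
begin

lemma component_eq_edge_nbhd: "component E b = edge_nbhd E b c"
proof
  show "component E b \<subseteq> edge_nbhd E b c"
    using edge_nbhd_closed by (intro component_subset) (auto simp: edge_nbhd_def)
  show "edge_nbhd E b c \<subseteq> component E b"
    unfolding edge_nbhd_def component_def using bc
    by (auto intro: rtranclp.rtrancl_into_rtrancl)
qed

lemma gdist_le_3_in_edge_nbhd:
  assumes "u \<in> edge_nbhd E b c" "v \<in> edge_nbhd E b c"
  shows "gdist E u v \<le> 3"
proof -
  have near: "\<exists>p\<in>{b, c}. (x = p \<or> E x p) \<and> (p = x \<or> E p x)" if "x \<in> edge_nbhd E b c" for x
  proof -
    from that consider "x = b \<or> x = c" | "E b x" | "E c x" unfolding edge_nbhd_def by blast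
    then show ?thesis
    proof cases
      case 2
      then show ?thesis using edge_sym[OF 2] by blast
    next
      case 3
      then show ?thesis using edge_sym[OF 3] by blast
    qed auto
  qed
  obtain p where "p \<in> {b, c}" "u = p \<or> E u p" using near[OF assms(1)] by blast
  moreover obtain q where "q \<in> {b, c}" "q = v \<or> E q v" using near[OF assms(2)] by blast
  moreover have "p = q \<or> E p q" if "p \<in> {b, c}" "q \<in> {b, c}" for p q
    using that bc edge_sym[OF bc] by blast
  ultimately obtain n where "n \<le> 3" "(E ^^ n) u v" using relpowp_le_3_if_walk by metis
  then show ?thesis using gdist_le by fastforce
qed

lemma gdist_branch_to_d:
  assumes f: "E b f" "f \<noteq> c"
  shows "gdist E f d = 3"
proof (rule gdist_eqI)
  show "(E ^^ 3) f d" unfolding relpowp_3_iff using edge_sym[OF f(1)] bc cd by blast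
  fix m :: nat assume "m < 3"
  then consider "m = 0" | "m = 1" | "m = 2" by arith
  then show "\<not> (E ^^ m) f d"
  proof cases
    case 1
    then show ?thesis using no_triangle[OF bc cd] edge_sym[OF f(1)] by auto
  next
    case 2
    then show ?thesis
      using no_4_cycle[OF edge_sym[OF f(1)] bc cd f(2)] distinct_abcd edge_sym by auto
  next
    case 3
    have "y = b" if "E f y" for y using leaf_at_b[OF f that] .
    then show ?thesis
      unfolding \<open>m = 2\<close> relpowp_2_iff using no_triangle[OF bc cd] edge_sym[of b d] by blast
  qed
qed

lemma diameter_edge_nbhd:
  assumes "E b f" "f \<noteq> c"
  shows "diameter E (edge_nbhd E b c) = 3"
proof (rule diameter_eqI[OF _ gdist_le_3_in_edge_nbhd _ _ gdist_branch_to_d[OF assms]])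
  show "finite (edge_nbhd E b c)" using finite_subset[OF edge_nbhd_subset finite_V] .
  show "f \<in> edge_nbhd E b c" "d \<in> edge_nbhd E b c" using assms(1) cd unfolding edge_nbhd_def by auto
qed

lemma component_not_induced_path_if_branching:
  assumes "E b f" "f \<noteq> a" "f \<noteq> c"
  shows "\<not> induced_is_path E (component E b)"
proof
  assume "induced_is_path E (component E b)"
  moreover have "a \<in> component E b" "b \<in> component E b" "c \<in> component E b" "f \<in> component E b"
    unfolding component_eq_edge_nbhd edge_nbhd_def using edge_sym[OF ab] assms(1) by auto
  ultimately show False
    using induced_is_path_degree_le_2[of E _ b a c f] edge_sym[OF ab] bc assms distinct_abcd by auto
qed

end

context forest_graph
begin

lemma unbranched_if_diameter_3_components_paths:
  assumes no_P5: "\<not> has_P5 E"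
    and paths: "\<forall>v\<in>V. diameter E (component E v) = 3 \<longrightarrow> induced_is_path E (component E v)"
  shows "unbranched_P4s E"
proof (rule ccontr)
  assume "\<not> unbranched_P4s E"
  then obtain a b c d where P4: "distinct [a, b, c, d]" "E a b" "E b c" "E c d"
    and "(\<exists>f. E b f \<and> f \<noteq> a \<and> f \<noteq> c) \<or> (\<exists>f. E c f \<and> f \<noteq> b \<and> f \<noteq> d)"
    unfolding unbranched_P4s_def by blast
  then consider f where "E b f" "f \<noteq> a" "f \<noteq> c" | f where "E c f" "f \<noteq> d" "f \<noteq> b"
    by blast
  then show False
  proof cases
    case 1
    interpret P5_free_P4 V E a b c d
      using no_P5 P4 by unfold_locales
    have "b \<in> V" using edge_in_V(1)[OF bc] .
    with paths 1 show False
      using component_not_induced_path_if_branching diameter_edge_nbhd component_eq_edge_nbhd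
      by metis
  next
    case 2
    interpret P5_free_P4 V E d c b a
      using no_P5 P4 edge_sym by unfold_locales auto
    have "c \<in> V" using edge_in_V(1)[OF bc] .
    with paths 2 show False
      using component_not_induced_path_if_branching diameter_edge_nbhd component_eq_edge_nbhd
      by metis
  qed
qed

end

context unbranched_forest
begin

lemma component_of_P4:
  assumes P4: "E a b" "E b c" "E c d" "a \<noteq> c" "b \<noteq> d"
  shows "component E a = {a, b, c, d}"
proof
  note N = P4_neighbours[OF P4]
  show "component E a \<subseteq> {a, b, c, d}"
    by (rule component_subset) (use N in blast)+
  show "{a, b, c, d} \<subseteq> component E a"
    unfolding component_def using P4(1-3) by (auto intro: rtranclp.rtrancl_into_rtrancl)
qed

lemma induced_is_path_P4:
  assumes P4: "E a b" "E b c" "E c d" "a \<noteq> c" "b \<noteq> d"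
  shows "induced_is_path E {a, b, c, d}"
  unfolding induced_is_path_def
proof (intro exI[of _ "[a, b, c, d]"] conjI)
  note N = P4_neighbours[OF P4]
  show "distinct [a, b, c, d]" using distinct_if_walk4[OF P4] .
  have "\<not> E a c" "\<not> E a d" "\<not> E b d" using N(1,2) \<open>distinct [a, b, c, d]\<close> by auto
  moreover have "E b a" "E c b" "E d c" using P4(1-3) edge_sym by blast+
  moreover have "(\<exists>i. Suc i < length [a, b, c, d] \<and> Q i) \<longleftrightarrow> Q 0 \<or> Q 1 \<or> Q 2" for Q
    by (auto simp: less_Suc_eq numeral_2_eq_2)
  ultimately show "\<forall>u\<in>{a, b, c, d}. \<forall>v\<in>{a, b, c, d}. E u v \<longleftrightarrow> (\<exists>i. Suc i < length [a, b, c, d] \<and>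
      (u = [a, b, c, d] ! i \<and> v = [a, b, c, d] ! Suc i \<or>
       v = [a, b, c, d] ! i \<and> u = [a, b, c, d] ! Suc i))"
    using P4(1-3) edge_irrefl edge_sym[of c a] edge_sym[of d a] edge_sym[of d b]
      \<open>distinct [a, b, c, d]\<close> by auto
qed simp_all

lemma diameter_3_component_is_path:
  assumes "v \<in> V" "diameter E (component E v) = 3"
  shows "induced_is_path E (component E v)"
proof -
  have "component E v \<subseteq> V"
    using assms(1) edge_in_V(2) by (intro component_subset)
  moreover have "v \<in> component E v" by (simp add: component_def)
  ultimately obtain u w where uw: "u \<in> component E v" "w \<in> component E v" "gdist E u w = 3"
    using diameter_attained[of "component E v" v E] finite_subset[OF _ finite_V] assms(2) by metis
  have "component E u = component E v" using uw(1) by (rule component_eq_if_mem)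
  with uw(2) have "w \<in> component E u" by simp
  then have "E\<^sup>*\<^sup>* u w" by (simp add: component_def)
  note dist = gdist_relpowp[OF this, unfolded uw(3)]
  then obtain x y where walk: "E u x" "E x y" "E y w" unfolding relpowp_3_iff by blast
  have "u \<noteq> y" "x \<noteq> w" using dist(2)[of 1] walk by auto
  then have "component E u = {u, x, y, w}" "induced_is_path E {u, x, y, w}"
    using component_of_P4[OF walk] induced_is_path_P4[OF walk] by simp_all
  with \<open>component E u = component E v\<close> show ?thesis by simp
qed

end

context forest_graph
begin

lemma alice_wins_2_iff:
  "alice_wins V E 2 (\<lambda>_. None) True \<longleftrightarrow>
    \<not> has_P5 E \<and> unbranched_P4s E \<and> (has_P4 E \<longrightarrow> odd (card V))"
proof
  assume "alice_wins V E 2 (\<lambda>_. None) True"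
  then show "\<not> has_P5 E \<and> unbranched_P4s E \<and> (has_P4 E \<longrightarrow> odd (card V))"
    using not_alice_wins_2_if_has_P5 not_alice_wins_2_if_branched not_alice_wins_2_if_even_card
    by blast
next
  assume "\<not> has_P5 E \<and> unbranched_P4s E \<and> (has_P4 E \<longrightarrow> odd (card V))"
  then interpret unbranched_forest V E by unfold_locales auto
  show "alice_wins V E 2 (\<lambda>_. None) True"
    using \<open>_ \<and> _ \<and> (has_P4 E \<longrightarrow> odd (card V))\<close> by (intro alice_wins_2) auto
qed

lemma diameter_3_components_paths_iff:
  assumes "\<not> has_P5 E"
  shows "(\<forall>v\<in>V. diameter E (component E v) = 3 \<longrightarrow> induced_is_path E (component E v))
    \<longleftrightarrow> unbranched_P4s E"
proof
  assume "unbranched_P4s E"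
  then interpret unbranched_forest V E using assms by unfold_locales
  show "\<forall>v\<in>V. diameter E (component E v) = 3 \<longrightarrow> induced_is_path E (component E v)"
    using diameter_3_component_is_path by blast
qed (rule unbranched_if_diameter_3_components_paths[OF assms])

end

theorem theorem4p3:
  fixes V :: "'a set" and E :: "'a \<Rightarrow> 'a \<Rightarrow> bool"
  assumes "forest V E"
  shows "game_chromatic_number V E = 2 \<longleftrightarrow>
    ((1 \<le> longest_path_length V E \<and> longest_path_length V E \<le> 2) \<or>
     (longest_path_length V E = 3 \<and> odd (card V) \<and>
      (\<forall>v\<in>V. diameter E (component E v) = 3 \<longrightarrow> induced_is_path E (component E v))))"
proof -
  interpret forest_graph V E using assms by (rule forest_graph_if_forest)
  have "unbranched_P4s E" if "\<not> has_P4 E"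
    using that unfolding has_P4_def unbranched_P4s_def by blast
  then show ?thesis
    unfolding game_chromatic_number_eq_2_iff alice_wins_2_iff
    using diameter_3_components_paths_iff has_edge_iff has_P4_iff has_P5_iff
    by auto
qed

end
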